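(* There exists a fully-dynamic bin packing algorithm under general movement costs with asymptotic competitive ratio $2$ and additive term $1+\log_2 n$, using constant worst-case recourse, where $n$ is the maximum number of items present at any time and is known to the algorithm in advance.
   Context: Fully-dynamic bin packing: items (size $s_i\in[0,1]$, arbitrary movement cost $c_i\ge0$) are inserted and deleted; at each time $t$ the algorithm maintains a packing of the current items $\mathcal{I}_t$ into unit bins, paying $c_i$ each time it moves item $i$. It has asymptotic competitive ratio $\alpha'$ with additive term $\beta$ if it always uses at most $\alpha'\cdot OPT(\mathcal{I}_t)+\beta$ bins ($OPT$ the optimal number of bins), and worst-case recourse $\gamma$ if at each update it incurs movement cost at most $\gamma\cdot c_t$, $c_t$ being the cost of the item updated. *)

theory Defs
  imports Complex_Main
begin

text \<open>Items are identified by natural numbers. An update inserts an item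
  (identifier, size, movement cost) or deletes a present item.\<close>
datatype update = Ins nat real real | Del nat

fun apply_upd :: "(nat \<rightharpoonup> real \<times> real) \<Rightarrow> update \<Rightarrow> (nat \<rightharpoonup> real \<times> real)" where
  "apply_upd M (Ins i s c) = M(i \<mapsto> (s, c))"
| "apply_upd M (Del i) = M(i := None)"

definition current :: "update list \<Rightarrow> (nat \<rightharpoonup> real \<times> real)" where
  "current us = foldl apply_upd Map.empty us"

definition item_size :: "(nat \<rightharpoonup> real \<times> real) \<Rightarrow> nat \<Rightarrow> real" where
  "item_size M i = fst (the (M i))"

definition item_cost :: "(nat \<rightharpoonup> real \<times> real) \<Rightarrow> nat \<Rightarrow> real" where
  "item_cost M i = snd (the (M i))"

fun legal :: "(nat \<rightharpoonup> real \<times> real) \<Rightarrow> update \<Rightarrow> bool" where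
  "legal M (Ins i s c) = (i \<notin> dom M \<and> 0 \<le> s \<and> s \<le> 1 \<and> 0 \<le> c)"
| "legal M (Del i) = (i \<in> dom M)"

definition valid_seq :: "update list \<Rightarrow> bool" where
  "valid_seq us = (\<forall>k < length us. legal (current (take k us)) (us ! k))"

fun upd_cost :: "(nat \<rightharpoonup> real \<times> real) \<Rightarrow> update \<Rightarrow> real" where
  "upd_cost M (Ins i s c) = c"
| "upd_cost M (Del i) = item_cost M i"

text \<open>A packing assigns each item a bin (a natural number); only the
  assignment of present items matters.\<close>
type_synonym packing = "nat \<Rightarrow> nat"

definition feasible :: "(nat \<rightharpoonup> real \<times> real) \<Rightarrow> packing \<Rightarrow> bool" where
  "feasible M P = (\<forall>b. (\<Sum>i \<in> {i \<in> dom M. P i = b}. item_size M i) \<le> 1)"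

definition bins_used :: "(nat \<rightharpoonup> real \<times> real) \<Rightarrow> packing \<Rightarrow> nat" where
  "bins_used M P = card (P ` dom M)"

definition OPT :: "(nat \<rightharpoonup> real \<times> real) \<Rightarrow> nat" where
  "OPT M = (LEAST k. \<exists>P. feasible M P \<and> bins_used M P = k)"

definition move_cost :: "(nat \<rightharpoonup> real \<times> real) \<Rightarrow> packing \<Rightarrow> (nat \<rightharpoonup> real \<times> real) \<Rightarrow> packing \<Rightarrow> real" where
  "move_cost M0 P0 M1 P1 = (\<Sum>i \<in> {i \<in> dom M0 \<inter> dom M1. P0 i \<noteq> P1 i}. item_cost M1 i)"

definition bounded_by :: "nat \<Rightarrow> update list \<Rightarrow> bool" where
  "bounded_by n us = (\<forall>k \<le> length us. card (dom (current (take k us))) \<le> n)"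

end

theory Submission
  imports Defs "HOL-Library.Nat_Bijection" "HOL-Library.Discrete_Functions"
begin

(* Let J = floor_log n. Items of size at most 2^-(J+1) are tiny and all share one bin, which holds
   at most n of them. Every other item has a class j <= J, its size lying in (2^-(j+1), 2^-j]; the
   items of class j are kept in a list cut into blocks of 2^j consecutive entries, one bin per block.
   Class j thus uses ceil(N_j / 2^j) bins while its items have total size above N_j / 2^(j+1),
   which gives at most 2 OPT + 1 + J bins.
   For constant recourse each list is kept sorted by item cost rounded down to a power of two.
   Inserting or deleting an item x moves at most one item per rounded cost not exceeding that of x
   (an item at the boundary of its group of equal keys); these rounded costs are distinct powers of
   two, so they sum to at most twice the rounded cost of x, and the moved items cost at most 4 c_x. *)

section \<open>Reordering a sorted list with few moves\<close>

fun index_of :: "'a list \<Rightarrow> 'a \<Rightarrow> nat" where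
  "index_of [] x = 0"
| "index_of (y # ys) x = (if y = x then 0 else Suc (index_of ys x))"

lemma index_of_append_left: "x \<in> set xs \<Longrightarrow> index_of (xs @ ys) x = index_of xs x"
  by (induction xs) auto

lemma index_of_append_right: "x \<notin> set xs \<Longrightarrow> index_of (xs @ ys) x = length xs + index_of ys x"
  by (induction xs) auto

lemma index_of_less_length: "x \<in> set xs \<Longrightarrow> index_of xs x < length xs"
  by (induction xs) auto

lemma nth_index_of: "x \<in> set xs \<Longrightarrow> xs ! index_of xs x = x"
  by (induction xs) auto

lemma inj_on_index_of: "inj_on (index_of xs) (set xs)"
  by (metis inj_onI nth_index_of)

definition moved :: "'a list \<Rightarrow> 'a list \<Rightarrow> 'a set" where
  "moved xs xs' = {y \<in> set xs \<inter> set xs'. index_of xs y \<noteq> index_of xs' y}"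

lemma moved_subset: "moved xs xs' \<subseteq> set xs \<inter> set xs'"
  unfolding moved_def by blast

lemma moved_sym: "moved xs xs' = moved xs' xs"
  unfolding moved_def by auto

lemma moved_self [simp]: "moved xs xs = {}"
  unfolding moved_def by simp

lemma moved_append_left: "moved (p @ zs) (p @ zs') \<subseteq> moved zs zs'"
proof
  fix e assume e: "e \<in> moved (p @ zs) (p @ zs')"
  then have "e \<notin> set p"
    by (auto simp: moved_def index_of_append_left)
  with e show "e \<in> moved zs zs'"
    by (auto simp: moved_def index_of_append_right)
qed

lemma moved_snoc [simp]: "moved xs (xs @ [x]) = {}"
proof -
  have "moved [] [x] = {}" by (simp add: moved_def)
  then show ?thesis using moved_append_left[of xs "[]" "[x]"] by simp
qed

lemma moved_rotate:
  assumes "distinct (a # b)" "set (ys @ ys') \<inter> set (a # b) = {}" "length ys' = Suc (length ys)"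
  shows "moved (ys @ a # b) (ys' @ b @ [a]) \<subseteq> insert a (moved ys ys')"
proof
  fix e assume e: "e \<in> moved (ys @ a # b) (ys' @ b @ [a])"
  show "e \<in> insert a (moved ys ys')"
  proof (cases "e \<in> set ys")
    case True
    with assms(2) e have "e \<in> set ys'"
      by (auto simp: moved_def)
    with True e show ?thesis
      by (simp add: moved_def index_of_append_left)
  next
    case False
    show ?thesis
    proof (cases "e = a")
      case False
      with e \<open>e \<notin> set ys\<close> have "e \<in> set b"
        by (auto simp: moved_def)
      with assms have "e \<notin> set ys'" by auto
      with \<open>e \<noteq> a\<close> \<open>e \<in> set b\<close> \<open>e \<notin> set ys\<close> assms(3)
      have "index_of (ys @ a # b) e = index_of (ys' @ b @ [a]) e"
        by (simp add: index_of_append_left index_of_append_right)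
      with e show ?thesis by (simp add: moved_def)
    qed simp
  qed
qed

lemma moved_replace_by_last:
  assumes "x \<notin> set b"
  shows "moved (p @ x # b @ [z]) (p @ z # b) \<subseteq> {z}"
proof -
  have "moved (x # b @ [z]) (z # b) \<subseteq> {z}"
  proof
    fix e assume e: "e \<in> moved (x # b @ [z]) (z # b)"
    show "e \<in> {z}"
    proof (rule ccontr)
      assume "e \<notin> {z}"
      with e assms have "e \<in> set b" "e \<noteq> x" "e \<noteq> z"
        by (auto simp: moved_def)
      then have "index_of (x # b @ [z]) e = index_of (z # b) e"
        by (simp add: index_of_append_left)
      with e show False by (simp add: moved_def)
    qed
  qed
  then show ?thesis using moved_append_left[of p "x # b @ [z]" "z # b"] by simp
qed

abbreviation sorted_desc :: "('a \<Rightarrow> 'b::linorder) \<Rightarrow> 'a list \<Rightarrow> bool" where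
  "sorted_desc f xs \<equiv> sorted_wrt (\<lambda>a b. f b \<le> f a) xs"

lemma sorted_desc_last_group:
  fixes f :: "'a \<Rightarrow> 'b::linorder"
  assumes "sorted_desc f xs" "xs \<noteq> []"
  obtains ys g w where "xs = ys @ g" "g \<noteq> []" "\<forall>e\<in>set g. f e = w" "\<forall>e\<in>set ys. w < f e"
proof -
  have "\<exists>ys g w. xs = ys @ g \<and> g \<noteq> [] \<and> (\<forall>e\<in>set g. f e = w) \<and> (\<forall>e\<in>set ys. w < f e)"
    using assms
  proof (induction xs)
    case (Cons a rest)
    show ?case
    proof (cases "rest = []")
      case True
      then show ?thesis by (intro exI[of _ "[]"] exI[of _ "[a]"] exI[of _ "f a"]) auto
    next
      case False
      from Cons.prems have sorted: "sorted_desc f rest" and le: "\<forall>e\<in>set rest. f e \<le> f a"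
        by auto
      from Cons.IH[OF sorted False] obtain ys g w where
        split: "rest = ys @ g" "g \<noteq> []" "\<forall>e\<in>set g. f e = w" "\<forall>e\<in>set ys. w < f e"
        by blast
      have "w \<le> f a" using split le by (metis Un_iff last_in_set set_append)
      show ?thesis
      proof (cases "f a = w")
        case True
        then have "ys = []" using split le by (metis list.set_intros(1) Un_iff neq_Nil_conv not_le set_append)
        then show ?thesis using split True by (intro exI[of _ "[]"] exI[of _ "a # g"] exI[of _ w]) auto
      next
        case False
        then show ?thesis using split \<open>w \<le> f a\<close> by (intro exI[of _ "a # ys"] exI[of _ g] exI[of _ w]) auto
      qed
    qed
  qed simp
  then show ?thesis using that by blast
qed

lemma sorted_desc_append_const:
  assumes "sorted_desc f ys" "\<forall>e\<in>set g. f e = w" "\<forall>e\<in>set ys. w < f e"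
  shows "sorted_desc f (ys @ g)"
proof -
  have "sorted_desc f g"
    by (rule sorted_wrt_mono_rel[of g "\<lambda>_ _. True"]) (use assms(2) in auto)
  with assms show ?thesis by (auto simp: sorted_wrt_append intro: less_imp_le)
qed

definition moved_keys_below :: "('a \<Rightarrow> 'b::linorder) \<Rightarrow> 'a \<Rightarrow> 'a list \<Rightarrow> 'a list \<Rightarrow> bool" where
  "moved_keys_below f x xs xs' \<longleftrightarrow> inj_on f (moved xs xs') \<and> (\<forall>y\<in>moved xs xs'. f y \<le> f x)"

lemma moved_keys_below_if_moved_empty: "moved xs xs' = {} \<Longrightarrow> moved_keys_below f x xs xs'"
  by (simp add: moved_keys_below_def)

lemma moved_keys_below_insert:
  assumes "moved xs xs' \<subseteq> insert z (moved ys ys')" "moved_keys_below f x ys ys'"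
    "f z \<le> f x" "\<forall>y\<in>moved ys ys'. f z < f y"
  shows "moved_keys_below f x xs xs'"
proof -
  have "f z \<notin> f ` moved ys ys'" using assms(4) by auto
  with assms(2) have "inj_on f (insert z (moved ys ys'))"
    by (auto simp: moved_keys_below_def)
  with assms show ?thesis
    unfolding moved_keys_below_def by (auto intro: inj_on_subset)
qed

lemma sorted_desc_insert:
  fixes f :: "'a \<Rightarrow> 'b::linorder"
  assumes "distinct xs" "sorted_desc f xs" "x \<notin> set xs"
  shows "\<exists>xs'. distinct xs' \<and> set xs' = insert x (set xs) \<and> sorted_desc f xs' \<and>
    moved_keys_below f x xs xs'"
  using assms
proof (induction "length xs" arbitrary: xs rule: less_induct)
  case less
  show ?case
  proof (cases "xs = []")
    case True
    then show ?thesis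
      by (intro exI[of _ "[x]"]) (simp add: moved_keys_below_if_moved_empty moved_def)
  next
    case False
    with less.prems(2) obtain ys g w where xs: "xs = ys @ g" and "g \<noteq> []"
      and g: "\<forall>e\<in>set g. f e = w" and ys: "\<forall>e\<in>set ys. w < f e"
      by (rule sorted_desc_last_group)
    show ?thesis
    proof (cases "f x \<le> w")
      case True
      with xs g ys have "\<forall>e\<in>set xs. f x \<le> f e" by (auto intro: order.trans less_imp_le)
      with less.prems show ?thesis
        by (intro exI[of _ "xs @ [x]"])
          (auto simp: sorted_wrt_append moved_keys_below_if_moved_empty)
    next
      case False
      obtain a b where g_ab: "g = a # b" using \<open>g \<noteq> []\<close> by (cases g) auto
      have "length ys < length xs" "distinct ys" "sorted_desc f ys" "x \<notin> set ys"
        using less.prems xs g_ab by (auto simp: sorted_wrt_append)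
      then obtain ys' where ys': "distinct ys'" "set ys' = insert x (set ys)" "sorted_desc f ys'"
        "moved_keys_below f x ys ys'"
        using less.hyps by blast
      have "length ys' = Suc (length ys)"
        using ys'(1,2) \<open>distinct ys\<close> \<open>x \<notin> set ys\<close> by (metis card_insert_disjoint distinct_card finite_set)
      with less.prems ys'(2) have "moved xs (ys' @ b @ [a]) \<subseteq> insert a (moved ys ys')"
        unfolding xs g_ab by (intro moved_rotate) auto
      then have "moved_keys_below f x xs (ys' @ b @ [a])"
        by (rule moved_keys_below_insert[OF _ ys'(4)])
          (use False g g_ab ys in \<open>auto simp: moved_def\<close>)
      moreover have "sorted_desc f (ys' @ b @ [a])"
        by (rule sorted_desc_append_const[OF ys'(3), of _ w]) (use False g g_ab ys ys'(2) in auto)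
      moreover have "distinct (ys' @ b @ [a])"
        using less.prems ys'(1,2) unfolding xs g_ab by auto
      ultimately show ?thesis
        using ys'(2) xs g_ab by (intro exI[of _ "ys' @ b @ [a]"]) auto
    qed
  qed
qed

lemma sorted_desc_remove_from_last_group:
  assumes "distinct (ys @ g)" "sorted_desc f ys" "\<forall>e\<in>set g. f e = w" "\<forall>e\<in>set ys. w < f e"
    and "x \<in> set g"
  shows "\<exists>xs'. distinct xs' \<and> set xs' = set (ys @ g) - {x} \<and> sorted_desc f xs' \<and>
    moved_keys_below f x (ys @ g) xs'"
proof -
  obtain p q where g: "g = p @ x # q" using assms(5) by (meson split_list)
  show ?thesis
  proof (cases q rule: rev_exhaust)
    case Nil
    with assms(1) have "distinct (ys @ p)" "set (ys @ p) = set (ys @ g) - {x}"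
      unfolding g by auto
    moreover have "sorted_desc f (ys @ p)"
      by (rule sorted_desc_append_const[OF assms(2) _ assms(4)]) (use assms(3) in \<open>auto simp: g\<close>)
    moreover have "moved (ys @ g) (ys @ p) = {}"
      using moved_snoc[of "ys @ p" x] Nil unfolding g by (simp add: moved_sym)
    ultimately show ?thesis
      by (intro exI[of _ "ys @ p"]) (simp add: moved_keys_below_if_moved_empty)
  next
    case (snoc q' z)
    let ?xs' = "ys @ p @ z # q'"
    have "moved (ys @ g) ?xs' \<subseteq> {z}"
      using moved_replace_by_last[of x q' "ys @ p" z] assms(1) unfolding g snoc by simp
    then have "moved_keys_below f x (ys @ g) ?xs'"
      using moved_keys_below_insert[of "ys @ g" ?xs' z "[]" "[]" f x] assms(3,5)
      unfolding g snoc by (simp add: moved_keys_below_if_moved_empty)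
    moreover have "sorted_desc f ?xs'"
      by (rule sorted_desc_append_const[OF assms(2) _ assms(4)]) (use assms(3) in \<open>auto simp: g snoc\<close>)
    moreover have "distinct ?xs'" "set ?xs' = set (ys @ g) - {x}"
      using assms(1) unfolding g snoc by auto
    ultimately show ?thesis by (intro exI[of _ ?xs']) simp
  qed
qed

lemma sorted_desc_remove:
  fixes f :: "'a \<Rightarrow> 'b::linorder"
  assumes "distinct xs" "sorted_desc f xs" "x \<in> set xs"
  shows "\<exists>xs'. distinct xs' \<and> set xs' = set xs - {x} \<and> sorted_desc f xs' \<and>
    moved_keys_below f x xs xs'"
  using assms
proof (induction "length xs" arbitrary: xs rule: less_induct)
  case less
  from less.prems obtain ys g w where xs: "xs = ys @ g" and "g \<noteq> []"
    and g: "\<forall>e\<in>set g. f e = w" and ys: "\<forall>e\<in>set ys. w < f e"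
    by (metis empty_iff list.set(1) sorted_desc_last_group)
  have sorted_ys: "sorted_desc f ys" using less.prems(2) xs by (simp add: sorted_wrt_append)
  show ?case
  proof (cases "x \<in> set g")
    case True
    with less.prems(1) sorted_ys g ys show ?thesis
      unfolding xs by (rule sorted_desc_remove_from_last_group)
  next
    case False
    obtain b a where g_ba: "g = b @ [a]" using \<open>g \<noteq> []\<close> by (cases g rule: rev_exhaust) auto
    have "length ys < length xs" "distinct ys" "x \<in> set ys"
      using less.prems xs g_ba False by auto
    then obtain ys' where ys': "distinct ys'" "set ys' = set ys - {x}" "sorted_desc f ys'"
      "moved_keys_below f x ys ys'"
      using less.hyps[OF _ _ sorted_ys] by blast
    have "length ys' = length ys - 1"
      using ys'(1,2) \<open>distinct ys\<close> \<open>x \<in> set ys\<close> by (simp add: distinct_card[symmetric])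
    moreover have "length ys > 0" using \<open>x \<in> set ys\<close> by (cases ys) auto
    ultimately have "length ys = Suc (length ys')" by simp
    with less.prems ys'(2) have "moved (ys' @ a # b) xs \<subseteq> insert a (moved ys' ys)"
      unfolding xs g_ba by (intro moved_rotate) auto
    then have "moved xs (ys' @ a # b) \<subseteq> insert a (moved ys ys')"
      by (simp only: moved_sym)
    then have "moved_keys_below f x xs (ys' @ a # b)"
      by (rule moved_keys_below_insert[OF _ ys'(4)])
        (use g g_ba ys \<open>x \<in> set ys\<close> in \<open>auto simp: moved_def\<close>)
    moreover have "sorted_desc f (ys' @ a # b)"
      by (rule sorted_desc_append_const[OF ys'(3), of _ w]) (use g g_ba ys ys'(2) in auto)
    moreover have "distinct (ys' @ a # b)" "set (ys' @ a # b) = set xs - {x}"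
      using less.prems ys'(1,2) False unfolding xs g_ba by auto
    ultimately show ?thesis by (intro exI[of _ "ys' @ a # b"]) simp
  qed
qed

lemma sorted_desc_update:
  fixes f :: "'a \<Rightarrow> 'b::linorder"
  assumes "distinct xs" "sorted_desc f xs" "A - {x} = set xs - {x}"
  shows "\<exists>xs'. distinct xs' \<and> set xs' = A \<and> sorted_desc f xs' \<and> moved_keys_below f x xs xs'"
proof (cases "x \<in> A \<longleftrightarrow> x \<in> set xs")
  case True
  with assms(3) have "A = set xs" by blast
  with assms show ?thesis
    by (intro exI[of _ xs]) (simp add: moved_keys_below_if_moved_empty)
next
  case False
  then consider "x \<in> A" "x \<notin> set xs" | "x \<notin> A" "x \<in> set xs" by blast
  then show ?thesis
  proof cases
    case 1
    with assms(3) have "A = insert x (set xs)" by blast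
    then show ?thesis using sorted_desc_insert[OF assms(1,2) 1(2)] by simp
  next
    case 2
    with assms(3) have "A = set xs - {x}" by blast
    then show ?thesis using sorted_desc_remove[OF assms(1,2) 2(2)] by simp
  qed
qed

section \<open>Sums of distinct powers of two\<close>

definition pow2_floor :: "real \<Rightarrow> real" where
  "pow2_floor c = (if 0 < c then 2 powr of_int \<lfloor>log 2 c\<rfloor> else 0)"

definition pow2s :: "real set" where
  "pow2s = insert 0 (range (\<lambda>m::int. 2 powr of_int m))"

lemma pow2_floor_in_pow2s: "pow2_floor c \<in> pow2s"
  unfolding pow2_floor_def pow2s_def by auto

lemma pow2_floor_le: "0 \<le> c \<Longrightarrow> pow2_floor c \<le> c"
proof (cases "0 < c")
  case True
  have "2 powr of_int \<lfloor>log 2 c\<rfloor> \<le> 2 powr (log 2 c)"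
    by (rule powr_mono) auto
  with True show ?thesis unfolding pow2_floor_def by simp
qed (auto simp: pow2_floor_def)

lemma le_2_pow2_floor: "0 \<le> c \<Longrightarrow> c \<le> 2 * pow2_floor c"
proof (cases "0 < c")
  case True
  have "2 powr (log 2 c) \<le> 2 powr (of_int \<lfloor>log 2 c\<rfloor> + 1)"
    by (rule powr_mono) linarith+
  with True show ?thesis unfolding pow2_floor_def by (simp add: powr_add)
qed (auto simp: pow2_floor_def)

lemma pow2s_nonneg: "a \<in> pow2s \<Longrightarrow> 0 \<le> a"
  unfolding pow2s_def by auto

lemma pow2s_double_le:
  assumes "a \<in> pow2s" "b \<in> pow2s" "a < b"
  shows "2 * a \<le> b"
proof (cases "a = 0")
  case True
  with assms show ?thesis by (simp add: pow2s_nonneg)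
next
  case False
  with assms obtain m k :: int where a: "a = 2 powr of_int m" and b: "b = 2 powr of_int k"
    unfolding pow2s_def by auto
  with assms(3) have "real_of_int m + 1 \<le> of_int k" by simp
  then have "(2::real) powr (of_int m + 1) \<le> 2 powr of_int k" by (rule powr_mono) auto
  with a b show ?thesis by (simp add: powr_add)
qed

lemma sum_pow2s_less:
  assumes "finite V" "V \<subseteq> pow2s" "\<forall>a\<in>V. a < w" "w \<in> pow2s"
  shows "sum id V \<le> w"
  using assms
proof (induction V arbitrary: w rule: finite_linorder_max_induct)
  case (insert b A)
  have "sum id A \<le> b" using insert by auto
  moreover have "2 * b \<le> w" using insert by (auto intro: pow2s_double_le)
  moreover have "b \<notin> A" using insert.hyps by auto
  ultimately show ?case using insert.hyps by simp
qed (simp add: pow2s_nonneg)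

lemma sum_pow2s_le:
  assumes "finite V" "V \<subseteq> pow2s" "\<forall>a\<in>V. a \<le> w" "w \<in> pow2s"
  shows "sum id V \<le> 2 * w"
proof (cases "w = 0")
  case True
  with assms have "\<forall>a\<in>V. a = 0" by (force dest: pow2s_nonneg)
  with True show ?thesis by (simp add: sum.neutral)
next
  case False
  with assms(4) obtain m :: int where "w = 2 powr of_int m" unfolding pow2s_def by auto
  then have "2 * w = 2 powr of_int (m + 1)" by (simp add: powr_add)
  then have "2 * w \<in> pow2s" unfolding pow2s_def by blast
  moreover have "0 < w" using assms(4) False pow2s_nonneg by fastforce
  with assms(3) have "\<forall>a\<in>V. a < 2 * w" by fastforce
  ultimately show ?thesis using sum_pow2s_less[OF assms(1,2)] by blast
qed

lemma sum_le_4_if_inj_pow2_floor: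
  fixes c :: "'a \<Rightarrow> real"
  assumes "finite T" "inj_on (\<lambda>y. pow2_floor (c y)) T" "\<forall>y\<in>T. 0 \<le> c y"
    "\<forall>y\<in>T. pow2_floor (c y) \<le> pow2_floor b" "0 \<le> b"
  shows "sum c T \<le> 4 * b"
proof -
  have "sum c T \<le> (\<Sum>y\<in>T. 2 * pow2_floor (c y))"
    using assms(3) by (intro sum_mono) (simp add: le_2_pow2_floor)
  also have "\<dots> = 2 * sum id ((\<lambda>y. pow2_floor (c y)) ` T)"
    by (simp add: sum.reindex[OF assms(2)] sum_distrib_left)
  also have "\<dots> \<le> 2 * (2 * pow2_floor b)"
    using assms(1,4) by (intro mult_left_mono sum_pow2s_le) (auto simp: pow2_floor_in_pow2s)
  also have "\<dots> \<le> 4 * b" using pow2_floor_le[OF assms(5)] by simp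
  finally show ?thesis .
qed

section \<open>Size classes and the packing\<close>

definition tiny :: "nat \<Rightarrow> real \<Rightarrow> bool" where
  "tiny J s \<longleftrightarrow> s \<le> 1 / 2 ^ Suc J"

definition size_class_of :: "real \<Rightarrow> nat" where
  "size_class_of s = (LEAST j. 1 / 2 ^ Suc j < s)"

lemma size_class_of_le: "\<not> tiny J s \<Longrightarrow> size_class_of s \<le> J"
  unfolding size_class_of_def tiny_def by (rule Least_le) simp

lemma size_class_of_lower: "\<not> tiny J s \<Longrightarrow> 1 / 2 ^ Suc (size_class_of s) < s"
  unfolding size_class_of_def tiny_def by (rule LeastI[of _ J]) simp

lemma size_class_of_upper:
  assumes "s \<le> 1"
  shows "s \<le> 1 / 2 ^ size_class_of s"
proof (cases "size_class_of s")
  case (Suc j)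
  then have "\<not> 1 / 2 ^ Suc j < s"
    unfolding size_class_of_def by (metis lessI not_less_Least)
  with Suc show ?thesis by simp
qed (use assms in simp)

definition wf_instance :: "(nat \<rightharpoonup> real \<times> real) \<Rightarrow> bool" where
  "wf_instance M \<longleftrightarrow> finite (dom M) \<and>
     (\<forall>i\<in>dom M. 0 \<le> item_size M i \<and> item_size M i \<le> 1 \<and> 0 \<le> item_cost M i)"

definition class_members :: "nat \<Rightarrow> (nat \<rightharpoonup> real \<times> real) \<Rightarrow> nat \<Rightarrow> nat set" where
  "class_members J M j = {i \<in> dom M. \<not> tiny J (item_size M i) \<and> size_class_of (item_size M i) = j}"

definition cost_key :: "(nat \<rightharpoonup> real \<times> real) \<Rightarrow> nat \<Rightarrow> real" where
  "cost_key M i = pow2_floor (item_cost M i)"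

definition sorted_classes :: "nat \<Rightarrow> (nat \<rightharpoonup> real \<times> real) \<Rightarrow> (nat \<Rightarrow> nat list) \<Rightarrow> bool" where
  "sorted_classes J M L \<longleftrightarrow>
     (\<forall>j. distinct (L j) \<and> set (L j) = class_members J M j \<and> sorted_desc (cost_key M) (L j))"

text \<open>Tiny items share bin 0; bin \<open>Suc (prod_encode (j, q))\<close> holds the entries at positions
  \<open>q * 2 ^ j\<close> to \<open>q * 2 ^ j + 2 ^ j - 1\<close> of the list of class \<open>j\<close>.\<close>

definition pack :: "nat \<Rightarrow> (nat \<rightharpoonup> real \<times> real) \<Rightarrow> (nat \<Rightarrow> nat list) \<Rightarrow> packing" where
  "pack J M L i = (if tiny J (item_size M i) then 0
     else Suc (prod_encode (size_class_of (item_size M i),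
       index_of (L (size_class_of (item_size M i))) i div 2 ^ size_class_of (item_size M i))))"

lemma pack_eq_0_iff: "pack J M L i = 0 \<longleftrightarrow> tiny J (item_size M i)"
  by (simp add: pack_def)

lemma pack_eq_Suc_iff:
  "pack J M L i = Suc (prod_encode (j, q)) \<longleftrightarrow>
     \<not> tiny J (item_size M i) \<and> size_class_of (item_size M i) = j \<and> index_of (L j) i div 2 ^ j = q"
  by (auto simp: pack_def)

lemma sum_tiny_le_1:
  assumes "finite (dom M)" "card (dom M) \<le> 2 ^ Suc J"
  shows "sum (item_size M) {i \<in> dom M. tiny J (item_size M i)} \<le> 1"
proof -
  let ?T = "{i \<in> dom M. tiny J (item_size M i)}"
  have "sum (item_size M) ?T \<le> real (card ?T) * (1 / 2 ^ Suc J)"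
    by (rule sum_bounded_above) (simp add: tiny_def)
  also have "\<dots> \<le> 2 ^ Suc J * (1 / 2 ^ Suc J)"
  proof -
    have "card ?T \<le> card (dom M)" using assms(1) by (rule card_mono) blast
    with assms(2) have "card ?T \<le> 2 ^ Suc J" by simp
    then have "real (card ?T) \<le> 2 ^ Suc J" by (metis of_nat_le_iff of_nat_numeral of_nat_power)
    then show ?thesis by (intro mult_right_mono) auto
  qed
  finally show ?thesis by simp
qed

lemma div_eq_subset_block:
  fixes K q :: nat
  assumes "0 < K"
  shows "{p. p div K = q} \<subseteq> {q * K..<q * K + K}"
proof
  fix p assume "p \<in> {p. p div K = q}"
  then have "p div K = q" by simp
  moreover have "p div K * K + p mod K = p" by (rule div_mult_mod_eq)
  moreover have "p mod K < K" using assms by simp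
  ultimately show "p \<in> {q * K..<q * K + K}" by auto
qed

lemma sum_class_block_le_1:
  assumes "wf_instance M" "sorted_classes J M L"
  shows "sum (item_size M) {i \<in> dom M. pack J M L i = Suc (prod_encode (j, q))} \<le> 1"
proof -
  let ?B = "{i \<in> dom M. pack J M L i = Suc (prod_encode (j, q))}"
  have B: "?B = {i \<in> set (L j). index_of (L j) i div 2 ^ j = q}"
    using assms(2) by (auto simp: pack_eq_Suc_iff sorted_classes_def class_members_def)
  have "\<And>i. i \<in> ?B \<Longrightarrow> item_size M i \<le> 1 / 2 ^ j"
    using assms(1) size_class_of_upper by (auto simp: pack_eq_Suc_iff wf_instance_def)
  then have "sum (item_size M) ?B \<le> real (card ?B) * (1 / 2 ^ j)"
    by (rule sum_bounded_above)
  also have "real (card ?B) * (1 / 2 ^ j) \<le> 2 ^ j * (1 / 2 ^ j)"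
  proof -
    have "inj_on (index_of (L j)) ?B"
      unfolding B by (rule inj_on_subset[OF inj_on_index_of]) blast
    then have "card ?B = card (index_of (L j) ` ?B)" by (rule card_image[symmetric])
    also have "\<dots> \<le> card {q * 2 ^ j..<q * 2 ^ j + 2 ^ j :: nat}"
      using div_eq_subset_block[of "2 ^ j" q] unfolding B by (intro card_mono) auto
    finally have "card ?B \<le> (2::nat) ^ j" by simp
    then show ?thesis by (intro mult_right_mono) (auto simp flip: of_nat_le_iff)
  qed
  finally show ?thesis by simp
qed

lemma feasible_pack:
  assumes "wf_instance M" "sorted_classes J M L" "card (dom M) \<le> 2 ^ Suc J"
  shows "feasible M (pack J M L)"
  unfolding feasible_def
proof
  fix b
  show "sum (item_size M) {i \<in> dom M. pack J M L i = b} \<le> 1"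
  proof (cases b)
    case 0
    then show ?thesis
      using sum_tiny_le_1[of M J] assms(1,3) by (simp add: pack_eq_0_iff wf_instance_def)
  next
    case (Suc k)
    then have "b = Suc (prod_encode (prod_decode k))" by simp
    then show ?thesis
      using sum_class_block_le_1[OF assms(1,2)] by (metis surj_pair)
  qed
qed

section \<open>Number of bins\<close>

lemma sum_item_size_le_OPT:
  assumes "wf_instance M"
  shows "sum (item_size M) (dom M) \<le> real (OPT M)"
proof -
  have "feasible M id"
    using assms unfolding feasible_def wf_instance_def
    by (auto simp: Collect_conv_if)
  then have "\<exists>k P. feasible M P \<and> bins_used M P = k" by blast
  then have "\<exists>P. feasible M P \<and> bins_used M P = OPT M"
    unfolding OPT_def by (rule LeastI_ex)
  then obtain P where P: "feasible M P" "bins_used M P = OPT M" by blast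
  have "sum (item_size M) (dom M) = (\<Sum>b\<in>P ` dom M. sum (item_size M) {i \<in> dom M. P i = b})"
    using assms by (intro sum.image_gen) (simp add: wf_instance_def)
  also have "\<dots> \<le> (\<Sum>b\<in>P ` dom M. 1)"
    using P(1) unfolding feasible_def by (intro sum_mono) auto
  also have "\<dots> = real (OPT M)" using P(2) unfolding bins_used_def by simp
  finally show ?thesis .
qed

lemma card_image_div_lessThan:
  fixes K N :: nat
  assumes "0 < K"
  shows "card ((\<lambda>p. p div K) ` {..<N}) \<le> (N + K - 1) div K"
proof -
  have "(\<lambda>p. p div K) ` {..<N} \<subseteq> {..<(N + K - 1) div K}"
  proof
    fix d assume "d \<in> (\<lambda>p. p div K) ` {..<N}"
    then obtain p where p: "p < N" "d = p div K" by auto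
    have "(p + K) div K = p div K + 1" using assms by simp
    moreover have "(p + K) div K \<le> (N + K - 1) div K" using p(1) by (intro div_le_mono) simp
    ultimately show "d \<in> {..<(N + K - 1) div K}" using p by simp
  qed
  then show ?thesis by (metis card_lessThan card_mono finite_lessThan)
qed

lemma real_div_round_up_le:
  fixes K N :: nat
  assumes "0 < K"
  shows "real ((N + K - 1) div K) \<le> real N / real K + 1 - 1 / real K"
proof -
  have "real ((N + K - 1) div K * K) \<le> real (N + K - 1)" by (simp only: of_nat_le_iff) simp
  then have "real ((N + K - 1) div K) * real K \<le> real N + real K - 1"
    using assms by (simp add: of_nat_diff)
  then have "real ((N + K - 1) div K) \<le> (real N + real K - 1) / real K"
    using assms by (simp add: le_divide_eq)
  also have "\<dots> = real N / real K + 1 - 1 / real K" using assms by (simp add: field_simps)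
  finally show ?thesis .
qed

lemma sum_one_minus_inverse_pow2_le: "(\<Sum>j\<le>J. 1 - 1 / (2::real) ^ j) \<le> real J"
proof (induction J)
  case (Suc J)
  have "0 \<le> 1 / (2::real) ^ Suc J" by simp
  with Suc.IH show ?case by (simp only: sum.atMost_Suc of_nat_Suc)
qed simp

lemma card_pack_image_le:
  assumes "sorted_classes J M L"
  shows "card (pack J M L ` dom M) \<le> 1 + (\<Sum>j\<le>J. (length (L j) + 2 ^ j - 1) div 2 ^ j)"
proof -
  define blocks where "blocks j = (\<lambda>p. Suc (prod_encode (j, p div 2 ^ j))) ` {..<length (L j)}" for j
  have "pack J M L ` dom M \<subseteq> {0} \<union> (\<Union>j\<le>J. blocks j)"
  proof
    fix b assume "b \<in> pack J M L ` dom M"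
    then obtain i where i: "i \<in> dom M" "b = pack J M L i" by auto
    show "b \<in> {0} \<union> (\<Union>j\<le>J. blocks j)"
    proof (cases "tiny J (item_size M i)")
      case False
      let ?j = "size_class_of (item_size M i)"
      have "i \<in> set (L ?j)"
        using assms i False by (auto simp: sorted_classes_def class_members_def)
      then have "index_of (L ?j) i < length (L ?j)" by (rule index_of_less_length)
      then have "b \<in> blocks ?j" using i False unfolding blocks_def by (auto simp: pack_def)
      with size_class_of_le[OF False] show ?thesis by auto
    qed (use i in \<open>simp add: pack_def\<close>)
  qed
  then have "card (pack J M L ` dom M) \<le> card ({0} \<union> (\<Union>j\<le>J. blocks j))"
    by (rule card_mono[rotated]) (simp add: blocks_def)
  also have "\<dots> \<le> 1 + (\<Sum>j\<le>J. card (blocks j))"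
    using card_Un_le[of "{0}" "\<Union>j\<le>J. blocks j"] card_UN_le[of "{..J}" blocks]
    by simp
  also have "(\<Sum>j\<le>J. card (blocks j)) \<le> (\<Sum>j\<le>J. (length (L j) + 2 ^ j - 1) div 2 ^ j)"
  proof (rule sum_mono)
    fix j
    have "blocks j = (\<lambda>d. Suc (prod_encode (j, d))) ` ((\<lambda>p. p div 2 ^ j) ` {..<length (L j)})"
      unfolding blocks_def by (simp add: image_image)
    then have "card (blocks j) \<le> card ((\<lambda>p. p div 2 ^ j) ` {..<length (L j)})"
      by (simp add: card_image_le)
    also have "\<dots> \<le> (length (L j) + 2 ^ j - 1) div 2 ^ j" by (rule card_image_div_lessThan) simp
    finally show "card (blocks j) \<le> (length (L j) + 2 ^ j - 1) div 2 ^ j" .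
  qed
  finally show ?thesis by simp
qed

lemma length_class_list_le:
  assumes "sorted_classes J M L"
  shows "real (length (L j)) / 2 ^ j \<le> 2 * sum (item_size M) (set (L j))"
proof -
  have "\<And>i. i \<in> set (L j) \<Longrightarrow> 1 / 2 ^ Suc j \<le> item_size M i"
    using assms size_class_of_lower
    by (fastforce simp: sorted_classes_def class_members_def intro: less_imp_le)
  then have "real (card (set (L j))) * (1 / 2 ^ Suc j) \<le> sum (item_size M) (set (L j))"
    by (rule sum_bounded_below)
  moreover have "card (set (L j)) = length (L j)"
    using assms unfolding sorted_classes_def by (blast intro: distinct_card)
  ultimately show ?thesis by (simp add: field_simps)
qed

lemma bins_used_pack_le:
  assumes "wf_instance M" "sorted_classes J M L"
  shows "real (bins_used M (pack J M L)) \<le> 2 * real (OPT M) + 1 + real J"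
proof -
  have "real (bins_used M (pack J M L)) \<le> 1 + (\<Sum>j\<le>J. real ((length (L j) + 2 ^ j - 1) div 2 ^ j))"
    using card_pack_image_le[OF assms(2)] unfolding bins_used_def
    by (metis of_nat_1 of_nat_add of_nat_le_iff of_nat_sum)
  also have "\<dots> \<le> 1 + (\<Sum>j\<le>J. real (length (L j)) / 2 ^ j + (1 - 1 / 2 ^ j))"
  proof -
    have "real ((length (L j) + 2 ^ j - 1) div 2 ^ j) \<le> real (length (L j)) / 2 ^ j + (1 - 1 / 2 ^ j)"
      for j using real_div_round_up_le[of "2 ^ j" "length (L j)"] by simp
    then show ?thesis by (simp add: sum_mono)
  qed
  also have "\<dots> = 1 + (\<Sum>j\<le>J. real (length (L j)) / 2 ^ j) + (\<Sum>j\<le>J. 1 - 1 / (2::real) ^ j)"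
    by (simp add: sum.distrib)
  also have "\<dots> \<le> 1 + (\<Sum>j\<le>J. 2 * sum (item_size M) (set (L j))) + real J"
  proof -
    have "(\<Sum>j\<le>J. real (length (L j)) / 2 ^ j) \<le> (\<Sum>j\<le>J. 2 * sum (item_size M) (set (L j)))"
      by (intro sum_mono length_class_list_le[OF assms(2)])
    with sum_one_minus_inverse_pow2_le[of J] show ?thesis by linarith
  qed
  also have "(\<Sum>j\<le>J. 2 * sum (item_size M) (set (L j))) = 2 * sum (item_size M) (\<Union>j\<le>J. set (L j))"
  proof -
    have "sum (item_size M) (\<Union>j\<le>J. set (L j)) = (\<Sum>j\<le>J. sum (item_size M) (set (L j)))"
      using assms by (intro sum.UNION_disjoint)
        (auto simp: sorted_classes_def class_members_def wf_instance_def)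
    then show ?thesis by (simp add: sum_distrib_left)
  qed
  also have "sum (item_size M) (\<Union>j\<le>J. set (L j)) \<le> sum (item_size M) (dom M)"
    using assms by (intro sum_mono2) (auto simp: sorted_classes_def class_members_def wf_instance_def)
  also have "\<dots> \<le> real (OPT M)" using assms(1) by (rule sum_item_size_le_OPT)
  finally show ?thesis by simp
qed

section \<open>Recourse of one update\<close>

lemma pack_update_changed:
  assumes "pack J M L i \<noteq> pack J M' (L(j := xs')) i" "item_size M' i = item_size M i"
  shows "\<not> tiny J (item_size M i) \<and> size_class_of (item_size M i) = j \<and>
    index_of (L j) i \<noteq> index_of xs' i"
proof -
  have "\<not> tiny J (item_size M i)" using assms by (auto simp: pack_def)
  moreover have "size_class_of (item_size M i) = j"
    using assms by (metis fun_upd_other pack_def)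
  ultimately show ?thesis using assms by (auto simp: pack_def)
qed

lemma sorted_classes_fun_upd:
  assumes "sorted_classes J M L"
    and "\<And>k. k \<noteq> j \<Longrightarrow> class_members J M' k = class_members J M k"
    and "\<And>k i. k \<noteq> j \<Longrightarrow> i \<in> class_members J M k \<Longrightarrow> cost_key M' i = cost_key M i"
    and "distinct xs'" "set xs' = class_members J M' j" "sorted_desc (cost_key M') xs'"
  shows "sorted_classes J M' (L(j := xs'))"
  unfolding sorted_classes_def
proof
  fix k
  show "distinct ((L(j := xs')) k) \<and> set ((L(j := xs')) k) = class_members J M' k \<and>
    sorted_desc (cost_key M') ((L(j := xs')) k)"
  proof (cases "k = j")
    case False
    with assms(1) have L: "distinct (L k)" "set (L k) = class_members J M k"
      "sorted_desc (cost_key M) (L k)" by (auto simp: sorted_classes_def)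
    have "sorted_desc (cost_key M') (L k)"
      by (rule sorted_wrt_mono_rel[OF _ L(3)]) (use False L(2) assms(3) in simp)
    with False L(1,2) assms(2) show ?thesis by simp
  qed (use assms(4-6) in simp)
qed

lemma move_cost_pack_update_le:
  assumes "set (L j) = class_members J M j" "set xs' = class_members J M' j"
    and "\<And>i. i \<in> dom M \<inter> dom M' \<Longrightarrow> item_size M' i = item_size M i"
    and "\<And>i. i \<in> moved (L j) xs' \<Longrightarrow> 0 \<le> item_cost M' i"
  shows "move_cost M (pack J M L) M' (pack J M' (L(j := xs'))) \<le> sum (item_cost M') (moved (L j) xs')"
  unfolding move_cost_def
proof (rule sum_mono2)
  show "finite (moved (L j) xs')"
    using moved_subset[of "L j" xs'] finite_subset by blast
  show "{i \<in> dom M \<inter> dom M'. pack J M L i \<noteq> pack J M' (L(j := xs')) i} \<subseteq> moved (L j) xs'"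
  proof
    fix i assume i: "i \<in> {i \<in> dom M \<inter> dom M'. pack J M L i \<noteq> pack J M' (L(j := xs')) i}"
    with assms(3) pack_update_changed[of J M L i M' j xs']
    have "\<not> tiny J (item_size M i)" "size_class_of (item_size M i) = j"
      "index_of (L j) i \<noteq> index_of xs' i" "item_size M' i = item_size M i" by auto
    with i assms(1,2) show "i \<in> moved (L j) xs'"
      by (auto simp: moved_def class_members_def)
  qed
qed (use assms(4) in blast)

lemma sorted_classes_change_item:
  assumes inv: "sorted_classes J M L" and wf: "wf_instance M"
    and same: "\<And>i. i \<noteq> x \<Longrightarrow> M' i = M i"
    and x: "M x = Some (s, c) \<and> M' x = None \<or> M x = None \<and> M' x = Some (s, c)"
    and "0 \<le> c"
  shows "\<exists>L'. sorted_classes J M' L' \<and> move_cost M (pack J M L) M' (pack J M' L') \<le> 4 * c"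
proof -
  define j where "j = size_class_of s"
  \<comment> \<open>a key valid for both instances: they only differ at \<open>x\<close>, whose cost is \<open>c\<close>\<close>
  define f where "f i = (if i = x then pow2_floor c else cost_key M i)" for i
  have L: "distinct (L k)" "set (L k) = class_members J M k" "sorted_desc (cost_key M) (L k)" for k
    using inv by (auto simp: sorted_classes_def)
  have x_notin: "x \<notin> dom M \<inter> dom M'" using x by auto
  have same_size: "item_size M' i = item_size M i" and same_cost: "item_cost M' i = item_cost M i"
    if "i \<noteq> x" for i
    using same[OF that] by (simp_all add: item_size_def item_cost_def)
  have members: "class_members J M' k - {x} = class_members J M k - {x}" for k
    using same same_size by (auto simp: class_members_def)
  have x_class: "x \<notin> class_members J M k \<and> x \<notin> class_members J M' k" if "k \<noteq> j" for k
    using x that by (auto simp: class_members_def item_size_def j_def)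
  have f_M: "f i = cost_key M i" if "i \<in> dom M" for i
    using x that by (auto simp: f_def cost_key_def item_cost_def)
  have f_M': "f i = cost_key M' i" if "i \<in> dom M'" for i
    using x that same_cost by (auto simp: f_def cost_key_def item_cost_def)
  have "sorted_desc f (L j)"
    by (rule sorted_wrt_mono_rel[OF _ L(3)[of j]]) (use L(2) f_M in \<open>auto simp: class_members_def\<close>)
  with L(1) obtain xs' where xs': "distinct xs'" "set xs' = class_members J M' j"
    "sorted_desc f xs'" "moved_keys_below f x (L j) xs'"
    using sorted_desc_update[of "L j" f "class_members J M' j" x] members[of j] L(2) by blast
  have "sorted_desc (cost_key M') xs'"
    by (rule sorted_wrt_mono_rel[OF _ xs'(3)]) (use xs'(2) f_M' in \<open>auto simp: class_members_def\<close>)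
  with xs'(1,2) have inv': "sorted_classes J M' (L(j := xs'))"
    using members x_class same_cost
    by (intro sorted_classes_fun_upd[OF inv]) (blast, metis cost_key_def)+
  have moved_items: "i \<in> dom M \<and> i \<noteq> x" if "i \<in> moved (L j) xs'" for i
    using that moved_subset[of "L j" xs'] L(2)[of j] x_notin xs'(2) by (auto simp: class_members_def)
  have moved_cost: "0 \<le> item_cost M' i" "pow2_floor (item_cost M' i) = f i"
    if "i \<in> moved (L j) xs'" for i
    using moved_items[OF that] wf same_cost f_M by (auto simp: wf_instance_def cost_key_def)
  have "move_cost M (pack J M L) M' (pack J M' (L(j := xs'))) \<le> sum (item_cost M') (moved (L j) xs')"
  proof (rule move_cost_pack_update_le[where L = L and j = j, OF L(2) xs'(2)])
    show "item_size M' i = item_size M i" if "i \<in> dom M \<inter> dom M'" for i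
      using that x_notin by (intro same_size) blast
  qed (rule moved_cost(1))
  also have "\<dots> \<le> 4 * c"
  proof (rule sum_le_4_if_inj_pow2_floor)
    show "finite (moved (L j) xs')"
      using moved_subset[of "L j" xs'] finite_subset by blast
    show "inj_on (\<lambda>i. pow2_floor (item_cost M' i)) (moved (L j) xs')"
    proof (rule inj_on_cong[THEN iffD2])
      show "inj_on f (moved (L j) xs')" using xs'(4) by (simp add: moved_keys_below_def)
    qed (simp add: moved_cost)
    show "\<forall>i\<in>moved (L j) xs'. pow2_floor (item_cost M' i) \<le> pow2_floor c"
      using xs'(4) by (simp add: moved_keys_below_def moved_cost f_def)
  qed (use moved_cost \<open>0 \<le> c\<close> in auto)
  finally show ?thesis using inv' by blast
qed

section \<open>The algorithm\<close>

lemma real_floor_log_le_log: "real (floor_log n) \<le> log 2 (real n)"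
proof (cases "n = 0")
  case False
  then have "0 \<le> log 2 (real n)" by simp
  with False have "real (floor_log n) = of_int \<lfloor>log 2 (real n)\<rfloor>"
    by (simp add: floor_log_altdef)
  then show ?thesis by linarith
qed (simp add: log_def)

lemma wf_instance_apply_upd: "wf_instance M \<Longrightarrow> legal M u \<Longrightarrow> wf_instance (apply_upd M u)"
  by (cases u) (auto simp: wf_instance_def item_size_def item_cost_def)

lemma legal_update_changes_one_item:
  assumes "wf_instance M" "legal M u"
  obtains x s c where "\<And>i. i \<noteq> x \<Longrightarrow> apply_upd M u i = M i"
    "M x = Some (s, c) \<and> apply_upd M u x = None \<or> M x = None \<and> apply_upd M u x = Some (s, c)"
    "upd_cost M u = c" "0 \<le> c"
proof (cases u)
  case (Ins i s c)
  with assms(2) that[of i s c] show ?thesis by auto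
next
  case (Del i)
  with assms that[of i "item_size M i" "item_cost M i"] show ?thesis
    by (auto simp: wf_instance_def item_size_def item_cost_def)
qed

lemma exists_class_lists_step:
  assumes "wf_instance M" "sorted_classes J M L" "legal M u"
  shows "\<exists>L'. sorted_classes J (apply_upd M u) L' \<and>
    move_cost M (pack J M L) (apply_upd M u) (pack J (apply_upd M u) L') \<le> 4 * upd_cost M u"
proof -
  obtain x s c where same: "\<And>i. i \<noteq> x \<Longrightarrow> apply_upd M u i = M i"
    and x: "M x = Some (s, c) \<and> apply_upd M u x = None \<or> M x = None \<and> apply_upd M u x = Some (s, c)"
    and "upd_cost M u = c" "0 \<le> c"
    using legal_update_changes_one_item[OF assms(1,3)] by blast
  with sorted_classes_change_item[OF assms(2,1) same x] show ?thesis by simp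
qed

definition class_lists_step ::
    "nat \<Rightarrow> (nat \<rightharpoonup> real \<times> real) \<Rightarrow> (nat \<Rightarrow> nat list) \<Rightarrow> update \<Rightarrow> nat \<Rightarrow> nat list" where
  "class_lists_step J M L u = (SOME L'. sorted_classes J (apply_upd M u) L' \<and>
     move_cost M (pack J M L) (apply_upd M u) (pack J (apply_upd M u) L') \<le> 4 * upd_cost M u)"

primrec class_lists_rev :: "nat \<Rightarrow> update list \<Rightarrow> nat \<Rightarrow> nat list" where
  "class_lists_rev J [] = (\<lambda>_. [])"
| "class_lists_rev J (u # rus) = class_lists_step J (current (rev rus)) (class_lists_rev J rus) u"

definition class_lists :: "nat \<Rightarrow> update list \<Rightarrow> nat \<Rightarrow> nat list" where
  "class_lists J us = class_lists_rev J (rev us)"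

lemma class_lists_snoc:
  "class_lists J (us @ [u]) = class_lists_step J (current us) (class_lists J us) u"
  by (simp add: class_lists_def)

lemma current_snoc: "current (us @ [u]) = apply_upd (current us) u"
  by (simp add: current_def)

lemma valid_seq_snoc: "valid_seq (us @ [u]) \<longleftrightarrow> valid_seq us \<and> legal (current us) u"
  unfolding valid_seq_def by (auto simp: nth_append less_Suc_eq)

lemma class_lists_step_spec:
  assumes "wf_instance M" "sorted_classes J M L" "legal M u"
  shows "sorted_classes J (apply_upd M u) (class_lists_step J M L u) \<and>
    move_cost M (pack J M L) (apply_upd M u) (pack J (apply_upd M u) (class_lists_step J M L u))
      \<le> 4 * upd_cost M u"
  unfolding class_lists_step_def by (rule someI_ex[OF exists_class_lists_step[OF assms]])

lemma valid_seq_invariants: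
  "valid_seq us \<Longrightarrow> wf_instance (current us) \<and> sorted_classes J (current us) (class_lists J us)"
proof (induction us rule: rev_induct)
  case Nil
  then show ?case
    by (simp add: current_def class_lists_def wf_instance_def sorted_classes_def class_members_def)
next
  case (snoc u us)
  then show ?case
    using class_lists_step_spec wf_instance_apply_upd
    by (simp add: valid_seq_snoc class_lists_snoc current_snoc)
qed

definition bin_packing_alg :: "nat \<Rightarrow> update list \<Rightarrow> packing" where
  "bin_packing_alg n us = pack (floor_log n) (current us) (class_lists (floor_log n) us)"

lemma bin_packing_alg_bins:
  assumes "valid_seq us" "bounded_by n us"
  shows "feasible (current us) (bin_packing_alg n us) \<and>
    real (bins_used (current us) (bin_packing_alg n us)) \<le> 2 * real (OPT (current us)) + 1 + log 2 (real n)"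
proof -
  let ?J = "floor_log n"
  have inv: "wf_instance (current us)" "sorted_classes ?J (current us) (class_lists ?J us)"
    using valid_seq_invariants[OF assms(1)] by auto
  have "card (dom (current us)) \<le> n"
    using assms(2) unfolding bounded_by_def by (metis order_refl take_all)
  also have "n \<le> 2 ^ Suc ?J" using floor_log_exp2_ge[of n] by simp
  finally have "feasible (current us) (bin_packing_alg n us)"
    unfolding bin_packing_alg_def by (rule feasible_pack[OF inv])
  moreover have "real (bins_used (current us) (bin_packing_alg n us)) \<le> 2 * real (OPT (current us)) + 1 + log 2 (real n)"
    using bins_used_pack_le[OF inv] real_floor_log_le_log[of n]
    unfolding bin_packing_alg_def by linarith
  ultimately show ?thesis ..
qed

lemma bin_packing_alg_recourse:
  assumes "valid_seq (us @ [u])"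
  shows "move_cost (current us) (bin_packing_alg n us) (current (us @ [u])) (bin_packing_alg n (us @ [u]))
    \<le> 4 * upd_cost (current us) u"
proof -
  from assms have "valid_seq us" "legal (current us) u" by (simp_all add: valid_seq_snoc)
  with class_lists_step_spec valid_seq_invariants show ?thesis
    by (simp add: bin_packing_alg_def class_lists_snoc current_snoc)
qed

theorem factC1:
  shows "\<exists>\<gamma>::real. \<forall>n::nat. \<exists>A :: update list \<Rightarrow> packing.
     (\<forall>us. valid_seq us \<and> bounded_by n us \<longrightarrow>
        feasible (current us) (A us) \<and>
        real (bins_used (current us) (A us))
          \<le> 2 * real (OPT (current us)) + 1 + log 2 (real n)) \<and>
     (\<forall>us u. valid_seq (us @ [u]) \<and> bounded_by n (us @ [u]) \<longrightarrow>
        move_cost (current us) (A us) (current (us @ [u])) (A (us @ [u]))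
          \<le> \<gamma> * upd_cost (current us) u)"
  using bin_packing_alg_bins bin_packing_alg_recourse
  by (intro exI[of _ 4] allI exI[of _ "bin_packing_alg n" for n]) blast

end
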